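(* Let $a>0$, $\Omega=(-a,a)$, and let $K:\Omega\times\Omega\to\mathbb{R}$ belong to $\mathcal{C}^{(n,n)}(\Omega\times\Omega)$. Let $x_1,\ldots,x_n\in\mathbb{R}$, and for $\varepsilon\ge 0$ small enough that $\varepsilon x_i\in\Omega$ for all $i$ define $\mathbf{K}_\varepsilon=[K(\varepsilon x_i,\varepsilon x_j)]_{i,j=1}^{n}$. Then: 1. As $\varepsilon\to 0$, \[\det(\mathbf{K}_\varepsilon)=\varepsilon^{n(n-1)}\Big(\det(\mathbf{V}_{\le n-1})^2\det\mathbf{W}_{n-1}+\mathcal{O}(\varepsilon)\Big).\] 2. If, for some $\varepsilon_0>0$, $\mathbf{K}_\varepsilon$ is positive semidefinite for all $\varepsilon\in[0,\varepsilon_0]$, and its eigenvalues are ordered $\lambda_1(\varepsilon)\ge\cdots\ge\lambda_n(\varepsilon)\ge0$, then $\lambda_k(\varepsilon)=\mathcal{O}(\varepsilon^{2(k-1)})$ as $\varepsilon\to0$ for each $1\le k\le n$.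
   Context: $K\in\mathcal{C}^{(\ell,\ell)}(\Omega\times\Omega)$ means that all partial derivatives $K^{(i,j)}=\frac{\partial^{i+j}K}{\partial x^i\partial y^j}$ exist and are continuous on $\Omega\times\Omega$ for $0\le i,j\le \ell$. The Wronskian matrix is $\mathbf{W}_k=\Big[\frac{K^{(i,j)}(0,0)}{i!\,j!}\Big]_{i,j=0}^{k}\in\mathbb{R}^{(k+1)\times(k+1)}$. The Vandermonde matrix is $\mathbf{V}_{\le k}=[x_i^{j}]_{1\le i\le n,\,0\le j\le k}\in\mathbb{R}^{n\times(k+1)}$. *)

theory Defs
  imports "HOL-Library.Landau_Symbols" "HOL-Analysis.Derivative" "Jordan_Normal_Form.Char_Poly"
begin

definition pderiv_xy :: "(real \<Rightarrow> real \<Rightarrow> real) \<Rightarrow> nat \<Rightarrow> nat \<Rightarrow> real \<Rightarrow> real \<Rightarrow> real" where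
  "pderiv_xy K i j x y = (deriv ^^ i) (\<lambda>x'. (deriv ^^ j) (\<lambda>y'. K x' y') y) x"

text \<open>K in C^(l,l)(Omega x Omega) with Omega = (-a,a): all K^(i,j), i,j \<le> l, exist
  (each differentiation step is a genuine derivative on Omega) and are continuous on Omega x Omega.\<close>
definition Cll :: "nat \<Rightarrow> real \<Rightarrow> (real \<Rightarrow> real \<Rightarrow> real) \<Rightarrow> bool" where
  "Cll l a K \<longleftrightarrow>
     (\<forall>j<l. \<forall>x\<in>{-a<..<a}. \<forall>y\<in>{-a<..<a}. (\<lambda>y'. pderiv_xy K 0 j x y') differentiable (at y)) \<and>
     (\<forall>i<l. \<forall>j\<le>l. \<forall>x\<in>{-a<..<a}. \<forall>y\<in>{-a<..<a}. (\<lambda>x'. pderiv_xy K i j x' y) differentiable (at x)) \<and>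
     (\<forall>i\<le>l. \<forall>j\<le>l. continuous_on ({-a<..<a} \<times> {-a<..<a}) (\<lambda>(x, y). pderiv_xy K i j x y))"

definition wronskian :: "(real \<Rightarrow> real \<Rightarrow> real) \<Rightarrow> nat \<Rightarrow> real mat" where
  "wronskian K k = mat (k+1) (k+1) (\<lambda>(i, j). pderiv_xy K i j 0 0 / (fact i * fact j))"

text \<open>Vandermonde matrix V_{\<le>k} = [x_i^j], i = 1..n (stored as x 0, ..., x (n-1)), j = 0..k.\<close>
definition vandermonde :: "(nat \<Rightarrow> real) \<Rightarrow> nat \<Rightarrow> nat \<Rightarrow> real mat" where
  "vandermonde x n k = mat n (k+1) (\<lambda>(i, j). x i ^ j)"

definition kernel_mat :: "(real \<Rightarrow> real \<Rightarrow> real) \<Rightarrow> (nat \<Rightarrow> real) \<Rightarrow> nat \<Rightarrow> real \<Rightarrow> real mat" where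
  "kernel_mat K x n \<epsilon> = mat n n (\<lambda>(i, j). K (\<epsilon> * x i) (\<epsilon> * x j))"

definition psd_mat :: "real mat \<Rightarrow> bool" where
  "psd_mat A \<longleftrightarrow> A \<in> carrier_mat (dim_row A) (dim_row A) \<and> transpose_mat A = A \<and>
     (\<forall>v \<in> carrier_vec (dim_row A). v \<bullet> (A *\<^sub>v v) \<ge> 0)"

definition ordered_eigenvalues :: "real mat \<Rightarrow> (nat \<Rightarrow> real) \<Rightarrow> bool" where
  "ordered_eigenvalues A lam \<longleftrightarrow>
     char_poly A = (\<Prod>k<dim_row A. [:- lam k, 1:]) \<and>
     (\<forall>i j. i \<le> j \<and> j < dim_row A \<longrightarrow> lam j \<le> lam i)"

end

theory Submission
  imports Defs "Jordan_Normal_Form.Schur_Decomposition"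
begin

(*
  For pairwise distinct nodes let T be the inverse of the Vandermonde matrix V, so that row p of T
  has the discrete moments sum_i T_pi x_i^c = [c = p] for c < n. Expanding K by Taylor's formula,
  first in y and then in x, these moment conditions make the (p,q) entry of T K_eps T^T equal to
  eps^(p+q) W_pq + O(eps^(p+q+1)). Dividing row p and column q by eps^p and eps^q gives
  det K_eps = det(V)^2 eps^(n(n-1)) (det W + O(eps)); for coinciding nodes both sides vanish.

  A vector orthogonal to (x_i^c)_i for all c < k has vanishing moments below order k, so the same
  double Taylor expansion bounds the quadratic form of K_eps on this subspace of codimension k by
  O(eps^(2k)) |v|^2. By the min-max principle, obtained from the spectral theorem for real symmetric
  matrices, this bounds the k-th largest eigenvalue (counting from 0), and positive semidefiniteness
  bounds it below by 0.
*)

section \<open>Taylor expansion against discrete moments\<close>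

definition moment :: "nat \<Rightarrow> (nat \<Rightarrow> real) \<Rightarrow> (nat \<Rightarrow> real) \<Rightarrow> nat \<Rightarrow> real" where
  "moment n x u c = (\<Sum>i<n. u i * x i ^ c)"

lemma sum_Maclaurin_moments:
  fixes f :: "nat \<Rightarrow> real \<Rightarrow> real" and u x :: "nat \<Rightarrow> real"
  assumes deriv: "\<And>c s. c < m \<Longrightarrow> \<bar>s\<bar> < r \<Longrightarrow> (f c has_real_derivative f (Suc c) s) (at s)"
    and points: "\<And>i. i < n \<Longrightarrow> \<bar>e * x i\<bar> < r"
    and bound: "\<And>s. \<bar>s\<bar> < r \<Longrightarrow> \<bar>f m s\<bar> \<le> B"
  shows "\<bar>(\<Sum>i<n. u i * f 0 (e * x i)) - (\<Sum>c<m. f c 0 / fact c * e ^ c * moment n x u c)\<bar>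
           \<le> \<bar>e\<bar> ^ m * (\<Sum>i<n. \<bar>u i\<bar> * \<bar>x i\<bar> ^ m) * B / fact m"
proof -
  have "\<exists>t. \<bar>t\<bar> \<le> \<bar>e * x i\<bar> \<and>
          f 0 (e * x i) = (\<Sum>c<m. f c 0 / fact c * (e * x i) ^ c) + f m t / fact m * (e * x i) ^ m"
    if i: "i < n" for i
  proof (rule Maclaurin_bi_le)
    show "\<forall>c s. c < m \<and> \<bar>s\<bar> \<le> \<bar>e * x i\<bar> \<longrightarrow> (f c has_real_derivative f (Suc c) s) (at s)"
    proof (intro allI impI)
      fix c s assume "c < m \<and> \<bar>s\<bar> \<le> \<bar>e * x i\<bar>"
      then show "(f c has_real_derivative f (Suc c) s) (at s)"
        using points[OF i] by (intro deriv) auto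
    qed
  qed simp
  then have "\<forall>i\<in>{..<n}. \<exists>t. \<bar>t\<bar> \<le> \<bar>e * x i\<bar> \<and>
      f 0 (e * x i) = (\<Sum>c<m. f c 0 / fact c * (e * x i) ^ c) + f m t / fact m * (e * x i) ^ m"
    by blast
  from bchoice[OF this] obtain t where "\<forall>i\<in>{..<n}. \<bar>t i\<bar> \<le> \<bar>e * x i\<bar> \<and>
      f 0 (e * x i) = (\<Sum>c<m. f c 0 / fact c * (e * x i) ^ c) + f m (t i) / fact m * (e * x i) ^ m"
    by blast
  then have t: "\<And>i. i < n \<Longrightarrow> \<bar>t i\<bar> \<le> \<bar>e * x i\<bar> \<and>
      f 0 (e * x i) = (\<Sum>c<m. f c 0 / fact c * (e * x i) ^ c) + f m (t i) / fact m * (e * x i) ^ m"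
    by blast
  have "(\<Sum>i<n. u i * f 0 (e * x i))
      = (\<Sum>i<n. u i * (\<Sum>c<m. f c 0 / fact c * (e * x i) ^ c) + u i * (f m (t i) / fact m * (e * x i) ^ m))"
    using t by (intro sum.cong) (auto simp: distrib_left)
  also have "\<dots> = (\<Sum>i<n. u i * (\<Sum>c<m. f c 0 / fact c * (e * x i) ^ c)) + (\<Sum>i<n. u i * (f m (t i) / fact m * (e * x i) ^ m))"
    by (rule sum.distrib)
  also have "(\<Sum>i<n. u i * (\<Sum>c<m. f c 0 / fact c * (e * x i) ^ c))
      = (\<Sum>i<n. \<Sum>c<m. f c 0 / fact c * e ^ c * (u i * x i ^ c))"
    by (simp add: sum_distrib_left power_mult_distrib mult_ac)
  also have "(\<Sum>i<n. \<Sum>c<m. f c 0 / fact c * e ^ c * (u i * x i ^ c))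
      = (\<Sum>c<m. f c 0 / fact c * e ^ c * moment n x u c)"
    unfolding moment_def by (subst sum.swap) (simp add: sum_distrib_left)
  finally have remainder: "(\<Sum>i<n. u i * f 0 (e * x i)) - (\<Sum>c<m. f c 0 / fact c * e ^ c * moment n x u c)
      = (\<Sum>i<n. u i * (f m (t i) / fact m * (e * x i) ^ m))"
    by simp
  have "\<bar>u i * (f m (t i) / fact m * (e * x i) ^ m)\<bar> \<le> \<bar>e\<bar> ^ m * (\<bar>u i\<bar> * \<bar>x i\<bar> ^ m) * B / fact m"
    if "i < n" for i
  proof -
    have "\<bar>f m (t i)\<bar> \<le> B" using t[OF that] points[OF that] by (intro bound) linarith
    have "\<bar>u i * (f m (t i) / fact m * (e * x i) ^ m)\<bar> = \<bar>e\<bar> ^ m * (\<bar>u i\<bar> * \<bar>x i\<bar> ^ m) * \<bar>f m (t i)\<bar> / fact m"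
      by (simp add: abs_mult power_abs power_mult_distrib)
    also have "\<dots> \<le> \<bar>e\<bar> ^ m * (\<bar>u i\<bar> * \<bar>x i\<bar> ^ m) * B / fact m"
      using \<open>\<bar>f m (t i)\<bar> \<le> B\<close> by (intro divide_right_mono mult_left_mono) auto
    finally show ?thesis .
  qed
  then have "\<bar>\<Sum>i<n. u i * (f m (t i) / fact m * (e * x i) ^ m)\<bar>
      \<le> (\<Sum>i<n. \<bar>e\<bar> ^ m * (\<bar>u i\<bar> * \<bar>x i\<bar> ^ m) * B / fact m)"
    by (intro order_trans[OF sum_abs sum_mono]) auto
  also have "\<dots> = \<bar>e\<bar> ^ m * (\<Sum>i<n. \<bar>u i\<bar> * \<bar>x i\<bar> ^ m) * B / fact m"
    by (simp add: sum_distrib_left sum_distrib_right sum_divide_distrib)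
  finally show ?thesis unfolding remainder .
qed

lemma sum_Maclaurin_vanishing_moments:
  fixes f :: "nat \<Rightarrow> real \<Rightarrow> real" and u x :: "nat \<Rightarrow> real"
  assumes "\<And>c s. c < m \<Longrightarrow> \<bar>s\<bar> < r \<Longrightarrow> (f c has_real_derivative f (Suc c) s) (at s)"
    and "\<And>i. i < n \<Longrightarrow> \<bar>e * x i\<bar> < r"
    and "\<And>s. \<bar>s\<bar> < r \<Longrightarrow> \<bar>f m s\<bar> \<le> B"
    and "\<And>c. c < m \<Longrightarrow> moment n x u c = 0"
  shows "\<bar>\<Sum>i<n. u i * f 0 (e * x i)\<bar> \<le> \<bar>e\<bar> ^ m * (\<Sum>i<n. \<bar>u i\<bar> * \<bar>x i\<bar> ^ m) * B / fact m"
  using sum_Maclaurin_moments[of m r f n e x B u] assms by simp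

lemma sum_Maclaurin_unit_moments:
  fixes f :: "nat \<Rightarrow> real \<Rightarrow> real" and u x :: "nat \<Rightarrow> real"
  assumes "\<And>c s. c < m \<Longrightarrow> \<bar>s\<bar> < r \<Longrightarrow> (f c has_real_derivative f (Suc c) s) (at s)"
    and "\<And>i. i < n \<Longrightarrow> \<bar>e * x i\<bar> < r"
    and "\<And>s. \<bar>s\<bar> < r \<Longrightarrow> \<bar>f m s\<bar> \<le> B"
    and "q < m" and "\<And>c. c < m \<Longrightarrow> moment n x u c = (if c = q then 1 else 0)"
  shows "\<bar>(\<Sum>i<n. u i * f 0 (e * x i)) - f q 0 / fact q * e ^ q\<bar>
           \<le> \<bar>e\<bar> ^ m * (\<Sum>i<n. \<bar>u i\<bar> * \<bar>x i\<bar> ^ m) * B / fact m"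
proof -
  have "(\<Sum>c<m. f c 0 / fact c * e ^ c * moment n x u c) = (\<Sum>c<m. if c = q then f c 0 / fact c * e ^ c else 0)"
    by (rule sum.cong) (simp_all add: assms(5))
  also have "\<dots> = f q 0 / fact q * e ^ q"
    using assms(4) by simp
  finally show ?thesis using sum_Maclaurin_moments[of m r f n e x B u] assms(1-3) by simp
qed

lemma pderiv_xy_0_0 [simp]: "pderiv_xy K 0 0 x y = K x y"
  by (simp add: pderiv_xy_def)

lemma Cll_has_derivative_y:
  assumes "Cll n a K" "j < n" "\<bar>x\<bar> < a" "\<bar>y\<bar> < a"
  shows "((\<lambda>y'. pderiv_xy K 0 j x y') has_real_derivative pderiv_xy K 0 (Suc j) x y) (at y)"
proof -
  have "x \<in> {-a<..<a}" "y \<in> {-a<..<a}" using assms(3,4) by auto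
  then have "(\<lambda>y'. pderiv_xy K 0 j x y') differentiable (at y)"
    using assms(1,2) unfolding Cll_def by blast
  then show ?thesis by (simp add: DERIV_deriv_iff_real_differentiable [symmetric] pderiv_xy_def)
qed

lemma Cll_has_derivative_x:
  assumes "Cll n a K" "i < n" "j \<le> n" "\<bar>x\<bar> < a" "\<bar>y\<bar> < a"
  shows "((\<lambda>x'. pderiv_xy K i j x' y) has_real_derivative pderiv_xy K (Suc i) j x y) (at x)"
proof -
  have "x \<in> {-a<..<a}" "y \<in> {-a<..<a}" using assms(4,5) by auto
  then have "(\<lambda>x'. pderiv_xy K i j x' y) differentiable (at x)"
    using assms(1-3) unfolding Cll_def by blast
  then show ?thesis by (simp add: DERIV_deriv_iff_real_differentiable [symmetric] pderiv_xy_def)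
qed

lemma Cll_bounded:
  assumes "Cll n a K" "a > 0"
  obtains B where "\<And>i j s t. i \<le> n \<Longrightarrow> j \<le> n \<Longrightarrow> \<bar>s\<bar> \<le> a/2 \<Longrightarrow> \<bar>t\<bar> \<le> a/2 \<Longrightarrow>
    \<bar>pderiv_xy K i j s t\<bar> \<le> B"
proof -
  define S where "S = {-a/2..a/2} \<times> {-a/2..a/2}"
  have "bounded ((\<lambda>(s, t). pderiv_xy K i j s t) ` S)" if "i \<le> n" "j \<le> n" for i j
  proof -
    have "continuous_on ({-a<..<a} \<times> {-a<..<a}) (\<lambda>(s, t). pderiv_xy K i j s t)"
      using assms that unfolding Cll_def by auto
    moreover have "S \<subseteq> {-a<..<a} \<times> {-a<..<a}" using assms(2) by (auto simp: S_def)
    ultimately have "continuous_on S (\<lambda>(s, t). pderiv_xy K i j s t)"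
      by (rule continuous_on_subset)
    moreover have "compact S" by (simp add: S_def compact_Times)
    ultimately show ?thesis by (intro compact_imp_bounded compact_continuous_image)
  qed
  then have "bounded (\<Union>(i, j)\<in>{..n} \<times> {..n}. (\<lambda>(s, t). pderiv_xy K i j s t) ` S)"
    by (intro bounded_UN) auto
  then obtain B where B: "\<And>z. z \<in> (\<Union>(i, j)\<in>{..n} \<times> {..n}. (\<lambda>(s, t). pderiv_xy K i j s t) ` S) \<Longrightarrow> norm z \<le> B"
    unfolding bounded_iff by blast
  show ?thesis
  proof (rule that)
    fix i j s t assume "i \<le> n" "j \<le> n" "\<bar>s\<bar> \<le> a/2" "\<bar>t\<bar> \<le> a/2"
    moreover have "(s, t) \<in> S" using \<open>\<bar>s\<bar> \<le> a/2\<close> \<open>\<bar>t\<bar> \<le> a/2\<close> by (auto simp: S_def)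
    then have "pderiv_xy K i j s t \<in> (\<lambda>(s, t). pderiv_xy K i j s t) ` S"
      by (rule rev_image_eqI) simp
    ultimately have "pderiv_xy K i j s t \<in> (\<Union>(i, j)\<in>{..n} \<times> {..n}. (\<lambda>(s, t). pderiv_xy K i j s t) ` S)"
      by (intro UN_I[of "(i, j)"]) auto
    then show "\<bar>pderiv_xy K i j s t\<bar> \<le> B" using B by simp
  qed
qed

lemma Cll_moment_sum_bound:
  fixes K :: "real \<Rightarrow> real \<Rightarrow> real" and w x :: "nat \<Rightarrow> real"
  assumes Cll: "Cll n a K" and "a > 0"
    and bound: "\<And>i j s t. i \<le> n \<Longrightarrow> j \<le> n \<Longrightarrow> \<bar>s\<bar> \<le> a/2 \<Longrightarrow> \<bar>t\<bar> \<le> a/2 \<Longrightarrow>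
      \<bar>pderiv_xy K i j s t\<bar> \<le> B"
    and "p \<le> n" "c \<le> n" "\<epsilon> \<ge> 0" "\<And>i. i < n \<Longrightarrow> \<bar>\<epsilon> * x i\<bar> < a/2" "\<bar>t\<bar> < a/2"
    and "\<And>d. d < p \<Longrightarrow> moment n x w d = 0"
  shows "\<bar>\<Sum>i<n. w i * pderiv_xy K 0 c (\<epsilon> * x i) t\<bar> \<le> \<epsilon> ^ p * (\<Sum>i<n. \<bar>w i\<bar> * \<bar>x i\<bar> ^ p) * B / fact p"
proof -
  have "\<bar>\<Sum>i<n. w i * pderiv_xy K 0 c (\<epsilon> * x i) t\<bar> \<le> \<bar>\<epsilon>\<bar> ^ p * (\<Sum>i<n. \<bar>w i\<bar> * \<bar>x i\<bar> ^ p) * B / fact p"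
  proof (rule sum_Maclaurin_vanishing_moments[where f = "\<lambda>d s. pderiv_xy K d c s t" and r = "a/2"])
    show "((\<lambda>s. pderiv_xy K d c s t) has_real_derivative pderiv_xy K (Suc d) c s t) (at s)"
      if "d < p" "\<bar>s\<bar> < a/2" for d s
      using assms that by (intro Cll_has_derivative_x[OF Cll]) auto
  qed (use assms in auto)
  then show ?thesis using \<open>\<epsilon> \<ge> 0\<close> by simp
qed

lemma kernel_form_vanishing_moments_bound:
  fixes K :: "real \<Rightarrow> real \<Rightarrow> real" and u w x :: "nat \<Rightarrow> real"
  assumes Cll: "Cll n a K" and "a > 0"
    and bound: "\<And>i j s t. i \<le> n \<Longrightarrow> j \<le> n \<Longrightarrow> \<bar>s\<bar> \<le> a/2 \<Longrightarrow> \<bar>t\<bar> \<le> a/2 \<Longrightarrow>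
      \<bar>pderiv_xy K i j s t\<bar> \<le> B"
    and "p \<le> n" "q \<le> n" "\<epsilon> \<ge> 0" and points: "\<And>i. i < n \<Longrightarrow> \<bar>\<epsilon> * x i\<bar> < a/2"
    and w: "\<And>c. c < p \<Longrightarrow> moment n x w c = 0" and u: "\<And>c. c < q \<Longrightarrow> moment n x u c = 0"
  shows "\<bar>\<Sum>j<n. u j * (\<Sum>i<n. w i * K (\<epsilon> * x i) (\<epsilon> * x j))\<bar>
           \<le> \<epsilon> ^ (p + q) * (\<Sum>i<n. \<bar>w i\<bar> * \<bar>x i\<bar> ^ p) * (\<Sum>j<n. \<bar>u j\<bar> * \<bar>x j\<bar> ^ q) * B / (fact p * fact q)"
proof -
  define h where "h c t = (\<Sum>i<n. w i * pderiv_xy K 0 c (\<epsilon> * x i) t)" for c t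
  have "\<bar>\<Sum>j<n. u j * h 0 (\<epsilon> * x j)\<bar>
      \<le> \<bar>\<epsilon>\<bar> ^ q * (\<Sum>j<n. \<bar>u j\<bar> * \<bar>x j\<bar> ^ q) * (\<epsilon> ^ p * (\<Sum>i<n. \<bar>w i\<bar> * \<bar>x i\<bar> ^ p) * B / fact p) / fact q"
  proof (rule sum_Maclaurin_vanishing_moments[where f = h and r = "a/2"])
    show "(h c has_real_derivative h (Suc c) t) (at t)" if "c < q" "\<bar>t\<bar> < a/2" for c t
      unfolding h_def using assms that
      by (intro DERIV_sum DERIV_cmult Cll_has_derivative_y[OF Cll]) (auto dest: points)
    show "\<bar>h q t\<bar> \<le> \<epsilon> ^ p * (\<Sum>i<n. \<bar>w i\<bar> * \<bar>x i\<bar> ^ p) * B / fact p" if "\<bar>t\<bar> < a/2" for t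
      unfolding h_def using that by (intro Cll_moment_sum_bound[OF Cll _ bound]) (use assms in auto)
  qed (use assms in auto)
  then show ?thesis using \<open>\<epsilon> \<ge> 0\<close> by (simp add: h_def power_add field_simps)
qed

lemma kernel_form_unit_moments_estimate:
  fixes K :: "real \<Rightarrow> real \<Rightarrow> real" and u w x :: "nat \<Rightarrow> real"
  assumes Cll: "Cll n a K" and "a > 0"
    and bound: "\<And>i j s t. i \<le> n \<Longrightarrow> j \<le> n \<Longrightarrow> \<bar>s\<bar> \<le> a/2 \<Longrightarrow> \<bar>t\<bar> \<le> a/2 \<Longrightarrow>
      \<bar>pderiv_xy K i j s t\<bar> \<le> B"
    and "p < n" "q < n" "0 \<le> \<epsilon>" "\<epsilon> \<le> 1" and points: "\<And>i. i < n \<Longrightarrow> \<bar>\<epsilon> * x i\<bar> < a/2"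
    and w: "\<And>c. c < n \<Longrightarrow> moment n x w c = (if c = p then 1 else 0)"
    and u: "\<And>c. c < n \<Longrightarrow> moment n x u c = (if c = q then 1 else 0)"
  shows "\<bar>(\<Sum>j<n. u j * (\<Sum>i<n. w i * K (\<epsilon> * x i) (\<epsilon> * x j))) - \<epsilon> ^ (p + q) * (pderiv_xy K p q 0 0 / (fact p * fact q))\<bar>
           \<le> \<epsilon> ^ (p + q + 1) * ((\<Sum>i<n. \<bar>w i\<bar> * \<bar>x i\<bar> ^ p) * (\<Sum>j<n. \<bar>u j\<bar> * \<bar>x j\<bar> ^ n) * B / (fact p * fact n)
              + (\<Sum>i<n. \<bar>w i\<bar> * \<bar>x i\<bar> ^ n) * B / (fact n * fact q))"
proof -
  define h where "h c t = (\<Sum>i<n. w i * pderiv_xy K 0 c (\<epsilon> * x i) t)" for c t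
  define Sp Sn Uq where "Sp = (\<Sum>i<n. \<bar>w i\<bar> * \<bar>x i\<bar> ^ p)" and "Sn = (\<Sum>i<n. \<bar>w i\<bar> * \<bar>x i\<bar> ^ n)"
    and "Uq = (\<Sum>j<n. \<bar>u j\<bar> * \<bar>x j\<bar> ^ n)"
  have "B \<ge> 0" using bound[of 0 0 0 0] \<open>a > 0\<close> by auto
  have nonneg: "Sp \<ge> 0" "Sn \<ge> 0" "Uq \<ge> 0" unfolding Sp_def Sn_def Uq_def by (auto intro: sum_nonneg)
  have y_expansion: "\<bar>(\<Sum>j<n. u j * h 0 (\<epsilon> * x j)) - h q 0 / fact q * \<epsilon> ^ q\<bar> \<le> \<epsilon> ^ n * Uq * (\<epsilon> ^ p * Sp * B / fact p) / fact n"
  proof -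
    have "\<bar>(\<Sum>j<n. u j * h 0 (\<epsilon> * x j)) - h q 0 / fact q * \<epsilon> ^ q\<bar> \<le> \<bar>\<epsilon>\<bar> ^ n * Uq * (\<epsilon> ^ p * Sp * B / fact p) / fact n"
      unfolding Uq_def
    proof (rule sum_Maclaurin_unit_moments[where f = h and r = "a/2"])
      show "(h c has_real_derivative h (Suc c) t) (at t)" if "c < n" "\<bar>t\<bar> < a/2" for c t
        unfolding h_def using assms that
        by (intro DERIV_sum DERIV_cmult Cll_has_derivative_y[OF Cll]) (auto dest: points)
      show "\<bar>h n t\<bar> \<le> \<epsilon> ^ p * Sp * B / fact p" if "\<bar>t\<bar> < a/2" for t
        unfolding h_def Sp_def using that by (intro Cll_moment_sum_bound[OF Cll _ bound]) (use assms in auto)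
    qed (use assms in auto)
    then show ?thesis using \<open>\<epsilon> \<ge> 0\<close> by simp
  qed
  have x_expansion: "\<bar>h q 0 - pderiv_xy K p q 0 0 / fact p * \<epsilon> ^ p\<bar> \<le> \<epsilon> ^ n * Sn * B / fact n"
  proof -
    have "\<bar>h q 0 - pderiv_xy K p q 0 0 / fact p * \<epsilon> ^ p\<bar> \<le> \<bar>\<epsilon>\<bar> ^ n * Sn * B / fact n"
      unfolding h_def Sn_def
    proof (rule sum_Maclaurin_unit_moments[where f = "\<lambda>d s. pderiv_xy K d q s 0" and r = "a/2"])
      show "((\<lambda>s. pderiv_xy K d q s 0) has_real_derivative pderiv_xy K (Suc d) q s 0) (at s)"
        if "d < n" "\<bar>s\<bar> < a/2" for d s
        using assms that by (intro Cll_has_derivative_x[OF Cll]) auto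
    qed (use assms in auto)
    then show ?thesis using \<open>\<epsilon> \<ge> 0\<close> by simp
  qed
  have powers: "\<epsilon> ^ (n + p) \<le> \<epsilon> ^ (p + q + 1)" "\<epsilon> ^ (q + n) \<le> \<epsilon> ^ (p + q + 1)"
    by (rule power_decreasing; use assms in auto)+
  have small_powers: "\<epsilon> ^ (n + p) * (Sp * Uq * B / (fact p * fact n)) \<le> \<epsilon> ^ (p + q + 1) * (Sp * Uq * B / (fact p * fact n))"
      "\<epsilon> ^ (q + n) * (Sn * B / (fact n * fact q)) \<le> \<epsilon> ^ (p + q + 1) * (Sn * B / (fact n * fact q))"
    by (rule mult_right_mono[OF powers(1)] mult_right_mono[OF powers(2)]; use nonneg \<open>B \<ge> 0\<close> in simp)+
  have "(\<Sum>j<n. u j * (\<Sum>i<n. w i * K (\<epsilon> * x i) (\<epsilon> * x j))) - \<epsilon> ^ (p + q) * (pderiv_xy K p q 0 0 / (fact p * fact q))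
      = ((\<Sum>j<n. u j * h 0 (\<epsilon> * x j)) - h q 0 / fact q * \<epsilon> ^ q)
        + \<epsilon> ^ q / fact q * (h q 0 - pderiv_xy K p q 0 0 / fact p * \<epsilon> ^ p)"
    by (simp add: h_def power_add field_simps)
  also have "\<bar>\<dots>\<bar> \<le> \<epsilon> ^ n * Uq * (\<epsilon> ^ p * Sp * B / fact p) / fact n + \<epsilon> ^ q / fact q * (\<epsilon> ^ n * Sn * B / fact n)"
  proof (rule order_trans[OF abs_triangle_ineq add_mono[OF y_expansion]])
    have "\<bar>\<epsilon> ^ q / fact q * (h q 0 - pderiv_xy K p q 0 0 / fact p * \<epsilon> ^ p)\<bar>
        = \<epsilon> ^ q / fact q * \<bar>h q 0 - pderiv_xy K p q 0 0 / fact p * \<epsilon> ^ p\<bar>"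
      using \<open>\<epsilon> \<ge> 0\<close> by (simp add: abs_mult)
    also have "\<dots> \<le> \<epsilon> ^ q / fact q * (\<epsilon> ^ n * Sn * B / fact n)"
      using x_expansion \<open>\<epsilon> \<ge> 0\<close> by (intro mult_left_mono) auto
    finally show "\<bar>\<epsilon> ^ q / fact q * (h q 0 - pderiv_xy K p q 0 0 / fact p * \<epsilon> ^ p)\<bar>
        \<le> \<epsilon> ^ q / fact q * (\<epsilon> ^ n * Sn * B / fact n)" .
  qed
  also have "\<dots> = \<epsilon> ^ (n + p) * (Sp * Uq * B / (fact p * fact n)) + \<epsilon> ^ (q + n) * (Sn * B / (fact n * fact q))"
    by (simp add: power_add field_simps)
  also have "\<dots> \<le> \<epsilon> ^ (p + q + 1) * (Sp * Uq * B / (fact p * fact n) + Sn * B / (fact n * fact q))"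
    using small_powers by (simp add: distrib_left)
  finally show ?thesis unfolding Sp_def Sn_def Uq_def .
qed

lemma eventually_at_right_0_points_small:
  fixes x :: "nat \<Rightarrow> real"
  assumes "r > 0"
  shows "\<forall>\<^sub>F \<epsilon> in at_right 0. 0 < \<epsilon> \<and> \<epsilon> < 1 \<and> (\<forall>i<n. \<bar>\<epsilon> * x i\<bar> < r)"
proof -
  have "\<forall>\<^sub>F \<epsilon> in at_right 0. \<bar>\<epsilon> * x i\<bar> < r" for i
  proof -
    have "((\<lambda>\<epsilon>. \<bar>\<epsilon> * x i\<bar>) \<longlongrightarrow> \<bar>0 * x i\<bar>) (at_right 0)"
      by (intro tendsto_intros)
    then show ?thesis using assms by (auto dest: order_tendstoD(2))
  qed
  then have "\<forall>\<^sub>F \<epsilon> in at_right 0. \<forall>i\<in>{..<n}. \<bar>\<epsilon> * x i\<bar> < r"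
    by (intro eventually_ball_finite) auto
  moreover have "\<forall>\<^sub>F \<epsilon> in at_right 0. \<epsilon> \<in> {0<..<1::real}"
    by (rule eventually_at_right_real) simp
  ultimately show ?thesis by eventually_elim auto
qed

lemma kernel_form_unit_moments_bigo:
  fixes K :: "real \<Rightarrow> real \<Rightarrow> real" and u w x :: "nat \<Rightarrow> real"
  assumes Cll: "Cll n a K" and "a > 0" and "p < n" "q < n"
    and w: "\<And>c. c < n \<Longrightarrow> moment n x w c = (if c = p then 1 else 0)"
    and u: "\<And>c. c < n \<Longrightarrow> moment n x u c = (if c = q then 1 else 0)"
  shows "(\<lambda>\<epsilon>. (\<Sum>j<n. u j * (\<Sum>i<n. w i * K (\<epsilon> * x i) (\<epsilon> * x j))) - \<epsilon> ^ (p + q) * (pderiv_xy K p q 0 0 / (fact p * fact q)))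
           \<in> O[at_right 0](\<lambda>\<epsilon>. \<epsilon> ^ (p + q + 1))"
proof -
  obtain B where bound: "\<And>i j s t. i \<le> n \<Longrightarrow> j \<le> n \<Longrightarrow> \<bar>s\<bar> \<le> a/2 \<Longrightarrow> \<bar>t\<bar> \<le> a/2 \<Longrightarrow>
      \<bar>pderiv_xy K i j s t\<bar> \<le> B"
    using Cll_bounded[OF Cll \<open>a > 0\<close>] by blast
  define C where "C = (\<Sum>i<n. \<bar>w i\<bar> * \<bar>x i\<bar> ^ p) * (\<Sum>j<n. \<bar>u j\<bar> * \<bar>x j\<bar> ^ n) * B / (fact p * fact n)
              + (\<Sum>i<n. \<bar>w i\<bar> * \<bar>x i\<bar> ^ n) * B / (fact n * fact q)"
  have "\<forall>\<^sub>F \<epsilon> in at_right 0. 0 < \<epsilon> \<and> \<epsilon> < 1 \<and> (\<forall>i<n. \<bar>\<epsilon> * x i\<bar> < a/2)"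
    using \<open>a > 0\<close> by (intro eventually_at_right_0_points_small) simp
  then have "\<forall>\<^sub>F \<epsilon> in at_right 0. norm ((\<Sum>j<n. u j * (\<Sum>i<n. w i * K (\<epsilon> * x i) (\<epsilon> * x j)))
      - \<epsilon> ^ (p + q) * (pderiv_xy K p q 0 0 / (fact p * fact q))) \<le> C * norm (\<epsilon> ^ (p + q + 1))"
  proof eventually_elim
    case (elim \<epsilon>)
    then show ?case
      using kernel_form_unit_moments_estimate[OF Cll \<open>a > 0\<close> bound \<open>p < n\<close> \<open>q < n\<close>, of \<epsilon> x w u] w u
      by (simp add: C_def mult.commute)
  qed
  then show ?thesis by (rule bigoI)
qed

section \<open>Perturbation of determinants\<close>

lemma const_bigo_1: "(\<lambda>_. c :: real) \<in> O[F](\<lambda>_. 1)"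
  by (rule bigoI[where c = "\<bar>c\<bar>"]) simp

lemma prod_diff_bigo:
  fixes f :: "'i \<Rightarrow> 'a \<Rightarrow> real" and g :: "'i \<Rightarrow> real"
  assumes "\<And>i. i \<in> I \<Longrightarrow> (\<lambda>x. f i x - g i) \<in> O[F](h)" and h: "h \<in> O[F](\<lambda>_. 1)"
  shows "(\<lambda>x. (\<Prod>i\<in>I. f i x) - (\<Prod>i\<in>I. g i)) \<in> O[F](h)"
  using assms(1)
proof (induction I rule: infinite_finite_induct)
  case (insert j I)
  have "(\<lambda>x. (f j x - g j) + g j) \<in> O[F](\<lambda>_. 1)"
    using landau_o.big_trans[OF insert.prems[of j] h] const_bigo_1 by (rule sum_in_bigo) auto
  then have "f j \<in> O[F](\<lambda>_. 1)" by simp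
  moreover have "(\<lambda>x. (\<Prod>i\<in>I. f i x) - (\<Prod>i\<in>I. g i)) \<in> O[F](h)"
    using insert by simp
  ultimately have "(\<lambda>x. ((\<Prod>i\<in>I. f i x) - (\<Prod>i\<in>I. g i)) * f j x) \<in> O[F](h)"
    by (intro landau_o.big_1_mult)
  moreover have "(\<lambda>x. (f j x - g j) * (\<Prod>i\<in>I. g i)) \<in> O[F](h)"
    using insert.prems[of j] const_bigo_1 by (rule landau_o.big_1_mult) simp
  ultimately have "(\<lambda>x. ((\<Prod>i\<in>I. f i x) - (\<Prod>i\<in>I. g i)) * f j x + (f j x - g j) * (\<Prod>i\<in>I. g i)) \<in> O[F](h)"
    by (rule sum_in_bigo)
  then show ?case
    using insert by (simp add: algebra_simps)
qed simp_all

lemma det_diff_bigo: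
  fixes A :: "real mat" and B :: "'a \<Rightarrow> real mat"
  assumes A: "A \<in> carrier_mat n n" and B: "\<And>x. B x \<in> carrier_mat n n"
    and entries: "\<And>i j. i < n \<Longrightarrow> j < n \<Longrightarrow> (\<lambda>x. B x $$ (i, j) - A $$ (i, j)) \<in> O[F](h)"
    and h: "h \<in> O[F](\<lambda>_. 1)"
  shows "(\<lambda>x. det (B x) - det A) \<in> O[F](h)"
proof -
  have eq: "(\<lambda>x. det (B x) - det A) = (\<lambda>x. \<Sum>p \<in> {p. p permutes {0..<n}}.
      signof p * ((\<Prod>i = 0..<n. B x $$ (i, p i)) - (\<Prod>i = 0..<n. A $$ (i, p i))))"
    unfolding det_def'[OF A] det_def'[OF B] by (simp add: sum_subtractf right_diff_distrib)
  have "(\<lambda>x. signof p * ((\<Prod>i = 0..<n. B x $$ (i, p i)) - (\<Prod>i = 0..<n. A $$ (i, p i)))) \<in> O[F](h)"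
    if "p permutes {0..<n}" for p
  proof -
    have "(\<lambda>x. (\<Prod>i = 0..<n. B x $$ (i, p i)) - (\<Prod>i = 0..<n. A $$ (i, p i))) \<in> O[F](h)"
      using permutes_in_image[OF that] by (intro prod_diff_bigo entries h) auto
    then show ?thesis by simp
  qed
  then show ?thesis unfolding eq by (intro big_sum_in_bigo) simp
qed

section \<open>Expansion of the determinant of the kernel matrix\<close>

lemma vanishing_moments_imp_zero:
  fixes u x :: "nat \<Rightarrow> real"
  assumes inj: "inj_on x {..<n}" and moments: "\<And>c. c < n \<Longrightarrow> moment n x u c = 0" and "j < n"
  shows "u j = 0"
proof -
  define p where "p = (\<Prod>i\<in>{..<n} - {j}. [:- x i, 1:])"
  have "degree p \<le> (\<Sum>i\<in>{..<n} - {j}. degree [:- x i, 1:])"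
    unfolding p_def using degree_prod_sum_le[of "{..<n} - {j}" "\<lambda>i. [:- x i, 1:]"] by (simp add: comp_def)
  then have "degree p < n" using \<open>j < n\<close> by simp
  then have "poly p z = (\<Sum>c<n. coeff p c * z ^ c)" for z
    by (simp add: poly_altdef) (rule sum.mono_neutral_left, auto simp: coeff_eq_0)
  then have "(\<Sum>i<n. u i * poly p (x i)) = (\<Sum>i<n. \<Sum>c<n. coeff p c * (u i * x i ^ c))"
    by (simp add: sum_distrib_left mult_ac)
  also have "\<dots> = (\<Sum>c<n. \<Sum>i<n. coeff p c * (u i * x i ^ c))"
    by (rule sum.swap)
  also have "\<dots> = (\<Sum>c<n. coeff p c * moment n x u c)"
    by (simp add: moment_def sum_distrib_left)
  also have "\<dots> = 0" by (simp add: moments)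
  finally have "(\<Sum>i<n. u i * poly p (x i)) = 0" .
  moreover have "(\<Sum>i<n. u i * poly p (x i)) = u j * poly p (x j) + (\<Sum>i\<in>{..<n} - {j}. u i * poly p (x i))"
    by (rule sum.remove) (use \<open>j < n\<close> in auto)
  moreover have "(\<Sum>i\<in>{..<n} - {j}. u i * poly p (x i)) = 0"
    by (rule sum.neutral) (auto simp: p_def poly_prod)
  moreover have "poly p (x j) \<noteq> 0"
    using inj \<open>j < n\<close> by (auto simp: p_def poly_prod inj_on_def)
  ultimately show ?thesis by simp
qed

lemma vandermonde_carrier: "n \<ge> 1 \<Longrightarrow> vandermonde x n (n - 1) \<in> carrier_mat n n"
  unfolding vandermonde_def by simp

lemma kernel_mat_carrier [simp]: "kernel_mat K x n \<epsilon> \<in> carrier_mat n n"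
  unfolding kernel_mat_def by simp

lemma det_vandermonde_nonzero:
  assumes inj: "inj_on x {..<n}" and "n \<ge> 1"
  shows "det (vandermonde x n (n - 1)) \<noteq> 0"
proof
  let ?V = "vandermonde x n (n - 1)"
  have V: "transpose_mat ?V \<in> carrier_mat n n" using vandermonde_carrier[OF \<open>n \<ge> 1\<close>] by simp
  assume "det ?V = 0"
  then have "det (transpose_mat ?V) = 0" using det_transpose vandermonde_carrier[OF \<open>n \<ge> 1\<close>] by metis
  then obtain u where u: "u \<in> carrier_vec n" "u \<noteq> 0\<^sub>v n" and Vu: "transpose_mat ?V *\<^sub>v u = 0\<^sub>v n"
    unfolding det_0_iff_vec_prod_zero_field[OF V] by blast
  have "moment n x (\<lambda>i. u $ i) c = (transpose_mat ?V *\<^sub>v u) $ c" if "c < n" for c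
    using that u \<open>n \<ge> 1\<close>
    by (simp add: moment_def vandermonde_def scalar_prod_def atLeast0LessThan mult.commute)
  then have "u = 0\<^sub>v n"
    using vanishing_moments_imp_zero[OF inj, of "\<lambda>i. u $ i"] Vu u by (intro eq_vecI) auto
  with u show False by simp
qed

lemma congruence_kernel_mat_entry:
  assumes "T \<in> carrier_mat n n" "p < n" "q < n"
  shows "(T * kernel_mat K x n \<epsilon> * transpose_mat T) $$ (p, q)
           = (\<Sum>j<n. T $$ (q, j) * (\<Sum>i<n. T $$ (p, i) * K (\<epsilon> * x i) (\<epsilon> * x j)))"
  using assms
  by (simp add: scalar_prod_def atLeast0LessThan kernel_mat_def row_def col_def sum_distrib_right mult_ac)

lemma sum_lessThan_id_times_2: "(\<Sum>i<n. i) * 2 = n * (n - 1 :: nat)"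
proof (induction n)
  case (Suc n)
  then show ?case by (cases n) (simp_all add: algebra_simps)
qed simp

lemma det_scale_by_powers:
  fixes M :: "real mat"
  assumes M: "M \<in> carrier_mat n n" and "e \<noteq> 0"
  shows "det M = e ^ (n * (n - 1)) * det (mat n n (\<lambda>(p, q). M $$ (p, q) / e ^ (p + q)))"
proof -
  define N where "N = mat n n (\<lambda>(p, q). M $$ (p, q) / e ^ (p + q))"
  have N: "N \<in> carrier_mat n n" unfolding N_def by simp
  have "(\<Prod>i = 0..<n. M $$ (i, p i)) = e ^ (n * (n - 1)) * (\<Prod>i = 0..<n. N $$ (i, p i))"
    if p: "p permutes {0..<n}" for p
  proof -
    have "(\<Prod>i = 0..<n. M $$ (i, p i)) = (\<Prod>i = 0..<n. e ^ i * e ^ p i * N $$ (i, p i))"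
      using permutes_in_image[OF p] \<open>e \<noteq> 0\<close> by (intro prod.cong) (auto simp: N_def power_add)
    also have "\<dots> = (\<Prod>i = 0..<n. e ^ i) * (\<Prod>i = 0..<n. e ^ p i) * (\<Prod>i = 0..<n. N $$ (i, p i))"
      by (simp add: prod.distrib)
    also have "(\<Prod>i = 0..<n. e ^ p i) = (\<Prod>i = 0..<n. e ^ i)"
      using prod.permute[OF p, of "\<lambda>i. e ^ i"] by (simp add: comp_def)
    also have "(\<Prod>i = 0..<n. e ^ i) = e ^ (\<Sum>i = 0..<n. i)"
      by (simp add: power_sum)
    also have "e ^ (\<Sum>i = 0..<n. i) * e ^ (\<Sum>i = 0..<n. i) = e ^ (n * (n - 1))"
      using sum_lessThan_id_times_2[of n]
      by (simp add: atLeast0LessThan power_add [symmetric] mult_2_right [symmetric] mult.commute)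
    finally show ?thesis .
  qed
  then have "det M = (\<Sum>p \<in> {p. p permutes {0..<n}}. signof p * (e ^ (n * (n - 1)) * (\<Prod>i = 0..<n. N $$ (i, p i))))"
    unfolding det_def'[OF M] by (intro sum.cong) auto
  also have "\<dots> = e ^ (n * (n - 1)) * det N"
    by (simp add: det_def'[OF N] sum_distrib_left mult.left_commute)
  finally show ?thesis unfolding N_def .
qed

lemma identity_bigo_1_at_right_0: "(\<lambda>\<epsilon>::real. \<epsilon>) \<in> O[at_right 0](\<lambda>_. 1)"
proof (rule bigoI[where c = 1])
  have "\<forall>\<^sub>F \<epsilon> in at_right 0. \<epsilon> \<in> {0<..<1::real}"
    by (rule eventually_at_right_real) simp
  then show "\<forall>\<^sub>F \<epsilon> in at_right 0. norm (\<epsilon>::real) \<le> 1 * norm (1::real)"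
    by eventually_elim auto
qed

lemma det_kernel_mat_expansion_not_inj:
  assumes "n \<ge> 1" and "\<not> inj_on x {..<n}"
  shows "\<exists>R. R \<in> O[at_right 0](\<lambda>\<epsilon>. \<epsilon>) \<and>
           (\<forall>\<^sub>F \<epsilon> in at_right 0. det (kernel_mat K x n \<epsilon>) =
              \<epsilon> ^ (n * (n - 1)) * ((det (vandermonde x n (n - 1)))\<^sup>2 * det (wronskian K (n - 1)) + R \<epsilon>))"
proof -
  obtain i j where ij: "i < n" "j < n" "i \<noteq> j" "x i = x j"
    using assms(2) unfolding inj_on_def by auto
  have "det (vandermonde x n (n - 1)) = 0"
    by (rule det_identical_rows[OF vandermonde_carrier[OF \<open>n \<ge> 1\<close>] ij(3,1,2)])
      (use ij \<open>n \<ge> 1\<close> in \<open>auto intro!: eq_vecI simp: vandermonde_def\<close>)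
  moreover have "det (kernel_mat K x n \<epsilon>) = 0" for \<epsilon>
    by (rule det_identical_rows[OF kernel_mat_carrier ij(3,1,2)])
      (use ij in \<open>auto intro!: eq_vecI simp: kernel_mat_def\<close>)
  ultimately show ?thesis
    by (intro exI[of _ "\<lambda>_. 0"]) simp
qed

lemma bigo_divide_power_at_right_0:
  fixes f :: "real \<Rightarrow> real"
  assumes "(\<lambda>\<epsilon>. f \<epsilon> - \<epsilon> ^ k * c) \<in> O[at_right 0](\<lambda>\<epsilon>. \<epsilon> ^ (k + 1))"
  shows "(\<lambda>\<epsilon>. f \<epsilon> / \<epsilon> ^ k - c) \<in> O[at_right 0](\<lambda>\<epsilon>. \<epsilon>)"
proof -
  have "\<forall>\<^sub>F \<epsilon> in at_right 0. \<epsilon> ^ k \<noteq> (0::real)"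
    using eventually_at_right_less[of "0::real"] by eventually_elim simp
  then have divided: "(\<lambda>\<epsilon>. (f \<epsilon> - \<epsilon> ^ k * c) / \<epsilon> ^ k) \<in> O[at_right 0](\<lambda>\<epsilon>. \<epsilon> ^ (k + 1) / \<epsilon> ^ k)"
    using assms by (rule landau_o.big.divide_right)
  have "\<forall>\<^sub>F \<epsilon> in at_right 0. (f \<epsilon> - \<epsilon> ^ k * c) / \<epsilon> ^ k = f \<epsilon> / \<epsilon> ^ k - c"
    using eventually_at_right_less[of "0::real"] by eventually_elim (simp add: field_simps)
  from landau_o.big.in_cong[OF this] divided
  have "(\<lambda>\<epsilon>. f \<epsilon> / \<epsilon> ^ k - c) \<in> O[at_right 0](\<lambda>\<epsilon>. \<epsilon> ^ (k + 1) / \<epsilon> ^ k)"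
    by (rule iffD1)
  moreover have "\<forall>\<^sub>F \<epsilon> in at_right 0. \<epsilon> ^ (k + 1) / \<epsilon> ^ k = (\<epsilon>::real)"
    using eventually_at_right_less[of "0::real"] by eventually_elim simp
  then have "O[at_right 0](\<lambda>\<epsilon>. \<epsilon> ^ (k + 1) / \<epsilon> ^ k) = O[at_right 0](\<lambda>\<epsilon>::real. \<epsilon>)"
    by (rule landau_o.big.cong)
  ultimately show ?thesis
    by simp
qed

lemma inverse_vandermonde_unit_moments:
  assumes "n \<ge> 1" and T: "T \<in> carrier_mat n n" and TV: "T * vandermonde x n (n - 1) = 1\<^sub>m n"
    and "b < n" "c < n"
  shows "moment n x (\<lambda>j. T $$ (b, j)) c = (if c = b then 1 else 0)"
proof -
  have "moment n x (\<lambda>j. T $$ (b, j)) c = (T * vandermonde x n (n - 1)) $$ (b, c)"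
    using assms(1,2,4,5) by (simp add: moment_def vandermonde_def scalar_prod_def atLeast0LessThan row_def)
  then show ?thesis using TV assms(4,5) by simp
qed

lemma det_kernel_mat_expansion_inj:
  fixes K :: "real \<Rightarrow> real \<Rightarrow> real" and x :: "nat \<Rightarrow> real"
  assumes Cll: "Cll n a K" and "a > 0" and "n \<ge> 1" and inj: "inj_on x {..<n}"
  shows "\<exists>R. R \<in> O[at_right 0](\<lambda>\<epsilon>. \<epsilon>) \<and>
           (\<forall>\<^sub>F \<epsilon> in at_right 0. det (kernel_mat K x n \<epsilon>) =
              \<epsilon> ^ (n * (n - 1)) * ((det (vandermonde x n (n - 1)))\<^sup>2 * det (wronskian K (n - 1)) + R \<epsilon>))"
proof -
  define V W where "V = vandermonde x n (n - 1)" and "W = wronskian K (n - 1)"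
  have V: "V \<in> carrier_mat n n" and W: "W \<in> carrier_mat n n"
    using \<open>n \<ge> 1\<close> by (simp_all add: V_def W_def vandermonde_def wronskian_def)
  obtain T where T: "T \<in> carrier_mat n n" and TV: "T * V = 1\<^sub>m n"
    using det_non_zero_imp_unit[OF V det_vandermonde_nonzero[OF inj \<open>n \<ge> 1\<close>, folded V_def]]
    by (auto simp: Units_def ring_mat_def)
  note unit_moments = inverse_vandermonde_unit_moments[OF \<open>n \<ge> 1\<close> T TV[unfolded V_def]]
  define M where "M \<epsilon> = T * kernel_mat K x n \<epsilon> * transpose_mat T" for \<epsilon>
  define N where "N \<epsilon> = mat n n (\<lambda>(p, q). M \<epsilon> $$ (p, q) / \<epsilon> ^ (p + q))" for \<epsilon> :: real
  have "(\<lambda>\<epsilon>. N \<epsilon> $$ (p, q) - W $$ (p, q)) \<in> O[at_right 0](\<lambda>\<epsilon>. \<epsilon>)" if "p < n" "q < n" for p q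
  proof -
    have "(\<lambda>\<epsilon>. M \<epsilon> $$ (p, q) - \<epsilon> ^ (p + q) * W $$ (p, q)) \<in> O[at_right 0](\<lambda>\<epsilon>. \<epsilon> ^ (p + q + 1))"
      using kernel_form_unit_moments_bigo[OF Cll \<open>a > 0\<close> that unit_moments unit_moments] that \<open>n \<ge> 1\<close>
      by (simp add: M_def congruence_kernel_mat_entry[OF T] W_def wronskian_def)
    then have "(\<lambda>\<epsilon>. M \<epsilon> $$ (p, q) / \<epsilon> ^ (p + q) - W $$ (p, q)) \<in> O[at_right 0](\<lambda>\<epsilon>. \<epsilon>)"
      by (rule bigo_divide_power_at_right_0)
    then show ?thesis using that by (simp add: N_def)
  qed
  then have "(\<lambda>\<epsilon>. det (N \<epsilon>) - det W) \<in> O[at_right 0](\<lambda>\<epsilon>. \<epsilon>)"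
    by (intro det_diff_bigo[OF W _ _ identity_bigo_1_at_right_0]) (auto simp: N_def)
  then have "(\<lambda>\<epsilon>. (det V)\<^sup>2 * (det (N \<epsilon>) - det W)) \<in> O[at_right 0](\<lambda>\<epsilon>. \<epsilon>)"
    by simp
  moreover have "\<forall>\<^sub>F \<epsilon> in at_right 0. det (kernel_mat K x n \<epsilon>) =
      \<epsilon> ^ (n * (n - 1)) * ((det V)\<^sup>2 * det W + (det V)\<^sup>2 * (det (N \<epsilon>) - det W))"
    using eventually_at_right_less[of "0::real"]
  proof eventually_elim
    case (elim \<epsilon>)
    have "det T * det V = 1" using det_mult[OF T V] TV by simp
    have "det (M \<epsilon>) = det T * det (kernel_mat K x n \<epsilon>) * det T"
      using T by (simp add: M_def det_mult[of _ n] det_transpose)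
    also have "det (M \<epsilon>) = \<epsilon> ^ (n * (n - 1)) * det (N \<epsilon>)"
      unfolding N_def using T elim by (intro det_scale_by_powers) (auto simp: M_def)
    finally have "(det V)\<^sup>2 * (\<epsilon> ^ (n * (n - 1)) * det (N \<epsilon>)) = (det T * det V)\<^sup>2 * det (kernel_mat K x n \<epsilon>)"
      by (simp add: power2_eq_square mult_ac)
    then show ?case using \<open>det T * det V = 1\<close> by (simp add: algebra_simps)
  qed
  ultimately show ?thesis unfolding V_def W_def by blast
qed

section \<open>Spectral theorem for real symmetric matrices\<close>

lemma conjugate_real_vec [simp]: "conjugate (v :: real vec) = v"
  by (rule eq_vecI) (auto simp: conjugate_vec_def)

lemma orthonormal_mat_of_orthogonal_cols:
  fixes ws :: "real vec list"
  assumes ws: "set ws \<subseteq> carrier_vec n" "length ws = n" "corthogonal ws"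
  defines "W \<equiv> mat_of_cols n (map (\<lambda>w. (1 / sqrt (w \<bullet> w)) \<cdot>\<^sub>v w) ws)"
  shows "W \<in> carrier_mat n n" and "transpose_mat W * W = 1\<^sub>m n"
    and "\<And>i. i < n \<Longrightarrow> col W i = (1 / sqrt (ws ! i \<bullet> ws ! i)) \<cdot>\<^sub>v ws ! i"
proof -
  show W: "W \<in> carrier_mat n n"
    unfolding W_def using mat_of_cols_carrier(1)[of n "map (\<lambda>w. (1 / sqrt (w \<bullet> w)) \<cdot>\<^sub>v w) ws"] ws(2) by simp
  have wsc: "ws ! i \<in> carrier_vec n" if "i < n" for i using ws that by auto
  show colW: "col W i = (1 / sqrt (ws ! i \<bullet> ws ! i)) \<cdot>\<^sub>v ws ! i" if "i < n" for i
    unfolding W_def using ws that by (subst col_mat_of_cols) auto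
  have orth: "(ws ! i \<bullet> ws ! j = 0) = (i \<noteq> j)" if "i < n" "j < n" for i j
    using corthogonalD[OF ws(3), of i j] ws(2) that by simp
  show "transpose_mat W * W = 1\<^sub>m n"
  proof (rule eq_matI)
    fix i j assume "i < dim_row (1\<^sub>m n)" "j < dim_col (1\<^sub>m n)"
    then have i: "i < n" and j: "j < n" by auto
    have "(transpose_mat W * W) $$ (i, j) = col W i \<bullet> col W j" using W i j by simp
    also have "\<dots> = (1 / sqrt (ws ! i \<bullet> ws ! i)) * (1 / sqrt (ws ! j \<bullet> ws ! j)) * (ws ! i \<bullet> ws ! j)"
      unfolding colW[OF i] colW[OF j] using wsc[OF i] wsc[OF j] by simp
    also have "\<dots> = 1\<^sub>m n $$ (i, j)"
    proof (cases "i = j")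
      case True
      have "ws ! i \<bullet> ws ! i \<ge> 0" using wsc[OF i] by (simp add: scalar_prod_def sum_nonneg)
      then have "ws ! i \<bullet> ws ! i > 0" using orth[OF i i] by simp
      then show ?thesis using True i by (simp add: field_simps)
    qed (use orth[OF i j] i j in simp)
    finally show "(transpose_mat W * W) $$ (i, j) = 1\<^sub>m n $$ (i, j)" .
  qed (use W in auto)
qed

lemma orthonormal_mat_with_first_col:
  fixes v :: "real vec"
  assumes v: "v \<in> carrier_vec n" and "v \<noteq> 0\<^sub>v n"
  obtains W where "W \<in> carrier_mat n n" "transpose_mat W * W = 1\<^sub>m n" "col W 0 = (1 / sqrt (v \<bullet> v)) \<cdot>\<^sub>v v"
proof -
  interpret cof_vec_space n "TYPE(real)" .
  define b where "b = basis_completion v"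
  define ws where "ws = gram_schmidt n b"
  from basis_completion[OF v \<open>v \<noteq> 0\<^sub>v n\<close>, folded b_def]
  have b: "distinct b" "\<not> lin_dep (set b)" "set b \<subseteq> carrier_vec n" "basis (set b)" by auto
  have "length b = n"
    using b distinct_card[of b] dim_basis[of "set b"] dim_is_n by simp
  have b_cons: "b = v # tl b" unfolding b_def basis_completion_def Let_def by simp
  from gram_schmidt_result[OF b(3,1,2) refl, folded ws_def]
  have ws: "set ws \<subseteq> carrier_vec n" "corthogonal ws" "length ws = n"
    using \<open>length b = n\<close> by auto
  then have "n > 0" using \<open>length b = n\<close> b_cons by (cases b) auto
  have "hd ws = v" using gram_schmidt_hd[OF v, of "tl b", folded b_cons] unfolding ws_def .
  then have "ws ! 0 = v" using \<open>n > 0\<close> ws(3) by (cases ws) auto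
  show ?thesis
    using orthonormal_mat_of_orthogonal_cols[OF ws(1,3,2)] \<open>n > 0\<close> \<open>ws ! 0 = v\<close> by (intro that) auto
qed

lemma orthonormal_congruence_first_col_eigenvector:
  fixes A W :: "real mat"
  assumes A: "A \<in> carrier_mat (Suc m) (Suc m)" and sym: "transpose_mat A = A"
    and W: "W \<in> carrier_mat (Suc m) (Suc m)" and WtW: "transpose_mat W * W = 1\<^sub>m (Suc m)"
    and eigen: "A *\<^sub>v col W 0 = e \<cdot>\<^sub>v col W 0"
  defines "A' \<equiv> transpose_mat W * A * W"
  shows "A' = four_block_mat (mat 1 1 (\<lambda>_. e)) (0\<^sub>m 1 m) (0\<^sub>m m 1) (mat m m (\<lambda>(i, j). A' $$ (Suc i, Suc j)))"
    and "transpose_mat A' = A'"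
proof -
  have A': "A' \<in> carrier_mat (Suc m) (Suc m)" unfolding A'_def using W A by auto
  show symA': "transpose_mat A' = A'"
  proof -
    have "transpose_mat A' = transpose_mat W * transpose_mat (transpose_mat W * A)"
      unfolding A'_def by (rule transpose_mult[of _ "Suc m" "Suc m"]) (use W A in auto)
    also have "transpose_mat (transpose_mat W * A) = transpose_mat A * W"
      by (subst transpose_mult[of _ "Suc m" "Suc m"]) (use W A in auto)
    finally show ?thesis
      unfolding A'_def sym using W A by (simp add: assoc_mult_mat[of _ "Suc m" "Suc m" _ "Suc m" _ "Suc m"])
  qed
  have col0: "A' $$ (i, 0) = (if i = 0 then e else 0)" if "i < Suc m" for i
  proof -
    have "A' $$ (i, 0) = col W i \<bullet> (A *\<^sub>v col W 0)"
      unfolding A'_def using W A that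
      by (simp add: assoc_mult_mat[of _ "Suc m" "Suc m" _ "Suc m" _ "Suc m"] mult_mat_vec_def)
    also have "\<dots> = e * (transpose_mat W * W) $$ (i, 0)"
      unfolding eigen using W that by simp
    finally show ?thesis unfolding WtW using that by simp
  qed
  have row0: "A' $$ (0, j) = (if j = 0 then e else 0)" if "j < Suc m" for j
    using col0[OF that] symA' A' that by (metis carrier_matD(1,2) index_transpose_mat(1) zero_less_Suc)
  show "A' = four_block_mat (mat 1 1 (\<lambda>_. e)) (0\<^sub>m 1 m) (0\<^sub>m m 1) (mat m m (\<lambda>(i, j). A' $$ (Suc i, Suc j)))"
  proof (rule eq_matI)
    fix i j assume "i < dim_row (four_block_mat (mat 1 1 (\<lambda>_. e)) (0\<^sub>m 1 m) (0\<^sub>m m 1) (mat m m (\<lambda>(i, j). A' $$ (Suc i, Suc j))))"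
      "j < dim_col (four_block_mat (mat 1 1 (\<lambda>_. e)) (0\<^sub>m 1 m) (0\<^sub>m m 1) (mat m m (\<lambda>(i, j). A' $$ (Suc i, Suc j))))"
    then have "i < Suc m" "j < Suc m" by auto
    then show "A' $$ (i, j) = four_block_mat (mat 1 1 (\<lambda>_. e)) (0\<^sub>m 1 m) (0\<^sub>m m 1) (mat m m (\<lambda>(i, j). A' $$ (Suc i, Suc j))) $$ (i, j)"
      using row0 col0 by (cases i; cases j) auto
  qed (use A' in auto)
qed

lemma orthonormal_block_diag_congruence:
  fixes P B :: "real mat"
  assumes P: "P \<in> carrier_mat m m" and PtP: "transpose_mat P * P = 1\<^sub>m m" and B: "B \<in> carrier_mat m m"
  defines "E \<equiv> four_block_mat (1\<^sub>m 1) (0\<^sub>m 1 m) (0\<^sub>m m 1) P"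
  shows "transpose_mat E * E = 1\<^sub>m (Suc m)"
    and "transpose_mat E * four_block_mat (mat 1 1 (\<lambda>_. e)) (0\<^sub>m 1 m) (0\<^sub>m m 1) B * E
           = four_block_mat (mat 1 1 (\<lambda>_. e)) (0\<^sub>m 1 m) (0\<^sub>m m 1) (transpose_mat P * B * P)"
proof -
  have Et: "transpose_mat E = four_block_mat (1\<^sub>m 1) (0\<^sub>m 1 m) (0\<^sub>m m 1) (transpose_mat P)"
    unfolding E_def using P by (subst transpose_four_block_mat) auto
  show "transpose_mat E * E = 1\<^sub>m (Suc m)"
    unfolding Et unfolding E_def using P PtP
    by (subst mult_four_block_mat[where ?nr1.0 = 1 and ?n1.0 = 1 and ?n2.0 = m and ?nr2.0 = m and ?nc1.0 = 1 and ?nc2.0 = m]) auto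
  have "transpose_mat E * four_block_mat (mat 1 1 (\<lambda>_. e)) (0\<^sub>m 1 m) (0\<^sub>m m 1) B
      = four_block_mat (mat 1 1 (\<lambda>_. e)) (0\<^sub>m 1 m) (0\<^sub>m m 1) (transpose_mat P * B)"
    unfolding Et using P B
    by (subst mult_four_block_mat[where ?nr1.0 = 1 and ?n1.0 = 1 and ?n2.0 = m and ?nr2.0 = m and ?nc1.0 = 1 and ?nc2.0 = m])
      (auto intro!: cong_four_block_mat eq_matI)
  also have "\<dots> * E = four_block_mat (mat 1 1 (\<lambda>_. e)) (0\<^sub>m 1 m) (0\<^sub>m m 1) (transpose_mat P * B * P)"
    unfolding E_def using P B
    by (subst mult_four_block_mat[where ?nr1.0 = 1 and ?n1.0 = 1 and ?n2.0 = m and ?nr2.0 = m and ?nc1.0 = 1 and ?nc2.0 = m])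
      (auto intro!: cong_four_block_mat eq_matI)
  finally show "transpose_mat E * four_block_mat (mat 1 1 (\<lambda>_. e)) (0\<^sub>m 1 m) (0\<^sub>m m 1) B * E
      = four_block_mat (mat 1 1 (\<lambda>_. e)) (0\<^sub>m 1 m) (0\<^sub>m m 1) (transpose_mat P * B * P)" .
qed

lemma orthonormal_congruence_similar:
  fixes A W :: "real mat"
  assumes "A \<in> carrier_mat n n" "W \<in> carrier_mat n n" "transpose_mat W * W = 1\<^sub>m n"
  shows "similar_mat (transpose_mat W * A * W) A"
proof -
  have "W * transpose_mat W = 1\<^sub>m n"
    using mat_mult_left_right_inverse[of "transpose_mat W" n W] assms(2,3) by simp
  then show ?thesis
    unfolding similar_mat_def similar_mat_wit_def Let_def using assms
    by (intro exI[of _ "transpose_mat W"] exI[of _ W]) auto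
qed

lemma four_block_diag_mat_Cons:
  "four_block_mat (mat 1 1 (\<lambda>_. e)) (0\<^sub>m 1 m) (0\<^sub>m m 1) (mat m m (\<lambda>(i, j). if i = j then es ! i else 0))
     = mat (Suc m) (Suc m) (\<lambda>(i, j). if i = j then (e # es) ! i else 0)"
proof (rule eq_matI)
  fix i j assume "i < dim_row (mat (Suc m) (Suc m) (\<lambda>(i, j). if i = j then (e # es) ! i else 0))"
    "j < dim_col (mat (Suc m) (Suc m) (\<lambda>(i, j). if i = j then (e # es) ! i else 0))"
  then show "four_block_mat (mat 1 1 (\<lambda>_. e)) (0\<^sub>m 1 m) (0\<^sub>m m 1) (mat m m (\<lambda>(i, j). if i = j then es ! i else 0)) $$ (i, j)
      = mat (Suc m) (Suc m) (\<lambda>(i, j). if i = j then (e # es) ! i else 0) $$ (i, j)"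
    by (cases i; cases j) auto
qed auto

lemma real_symmetric_deflation:
  fixes A :: "real mat"
  assumes A: "A \<in> carrier_mat (Suc m) (Suc m)" and sym: "transpose_mat A = A"
    and cp: "char_poly A = [:- e, 1:] * q"
  obtains W A3 where "W \<in> carrier_mat (Suc m) (Suc m)" "transpose_mat W * W = 1\<^sub>m (Suc m)"
    and "A3 \<in> carrier_mat m m" "transpose_mat A3 = A3" "char_poly A3 = q"
    and "transpose_mat W * A * W = four_block_mat (mat 1 1 (\<lambda>_. e)) (0\<^sub>m 1 m) (0\<^sub>m m 1) A3"
proof -
  have "eigenvalue A e" unfolding eigenvalue_root_char_poly[OF A] cp by simp
  then obtain v where v: "v \<in> carrier_vec (Suc m)" "v \<noteq> 0\<^sub>v (Suc m)" and Av: "A *\<^sub>v v = e \<cdot>\<^sub>v v"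
    using A unfolding eigenvalue_def eigenvector_def by auto
  obtain W where W: "W \<in> carrier_mat (Suc m) (Suc m)" and WtW: "transpose_mat W * W = 1\<^sub>m (Suc m)"
    and colW0: "col W 0 = (1 / sqrt (v \<bullet> v)) \<cdot>\<^sub>v v"
    using orthonormal_mat_with_first_col[OF v] by blast
  have "A *\<^sub>v col W 0 = e \<cdot>\<^sub>v col W 0"
    unfolding colW0 using mult_mat_vec[OF A v(1)] Av by (simp add: smult_smult_assoc mult.commute)
  define A' where "A' = transpose_mat W * A * W"
  define A3 where "A3 = mat m m (\<lambda>(i, j). A' $$ (Suc i, Suc j))"
  note congruence = orthonormal_congruence_first_col_eigenvector[OF A sym W WtW \<open>A *\<^sub>v col W 0 = e \<cdot>\<^sub>v col W 0\<close>]
  have blk: "A' = four_block_mat (mat 1 1 (\<lambda>_. e)) (0\<^sub>m 1 m) (0\<^sub>m m 1) A3"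
    unfolding A3_def A'_def by (rule congruence(1))
  have symA': "transpose_mat A' = A'"
    unfolding A'_def by (rule congruence(2))
  have A3: "A3 \<in> carrier_mat m m" by (simp add: A3_def)
  show ?thesis
  proof (rule that[OF W WtW A3])
    show "transpose_mat A3 = A3"
    proof (rule eq_matI)
      fix i j assume "i < dim_row A3" "j < dim_col A3"
      then have "Suc i < Suc m" "Suc j < Suc m" by (auto simp: A3_def)
      then have "A' $$ (Suc j, Suc i) = transpose_mat A' $$ (Suc i, Suc j)"
        using W A by (simp add: A'_def)
      then show "transpose_mat A3 $$ (i, j) = A3 $$ (i, j)"
        using symA' \<open>Suc i < Suc m\<close> \<open>Suc j < Suc m\<close> by (simp add: A3_def)
    qed (auto simp: A3_def)
    have "char_poly A = char_poly A'"
      using char_poly_similar[OF orthonormal_congruence_similar[OF A W WtW]] by (simp add: A'_def)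
    also have "\<dots> = char_poly (mat 1 1 (\<lambda>_. e)) * char_poly A3"
      unfolding blk by (rule char_poly_four_block_zeros_col) (use A3 in auto)
    also have "char_poly (mat 1 1 (\<lambda>_. e)) = [:- e, 1:]"
      by (simp add: char_poly_defs det_def sign_def)
    finally show "char_poly A3 = q" using cp by (metis mult_cancel_left pCons_eq_0_iff zero_neq_one)
    show "transpose_mat W * A * W = four_block_mat (mat 1 1 (\<lambda>_. e)) (0\<^sub>m 1 m) (0\<^sub>m m 1) A3"
      using blk unfolding A'_def .
  qed
qed

lemma real_symmetric_orthogonal_diagonalization:
  fixes A :: "real mat"
  assumes "A \<in> carrier_mat n n" "transpose_mat A = A" "char_poly A = (\<Prod>e\<leftarrow>es. [:- e, 1:])"
  shows "\<exists>P \<in> carrier_mat n n. transpose_mat P * P = 1\<^sub>m n \<and>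
           transpose_mat P * A * P = mat n n (\<lambda>(i, j). if i = j then es ! i else 0)"
  using assms
proof (induction es arbitrary: n A)
  case Nil
  then have "n = 0" using degree_monic_char_poly[of A n] by simp
  then show ?case by (intro bexI[of _ "1\<^sub>m 0"]) (auto intro!: eq_matI)
next
  case (Cons e es n A)
  then have A: "A \<in> carrier_mat n n" and cp: "char_poly A = [:- e, 1:] * (\<Prod>e\<leftarrow>es. [:- e, 1:])" by auto
  have "monic (\<Prod>e\<leftarrow>es. [:- e, 1:])" by (rule monic_prod_list) auto
  then have "degree (char_poly A) = Suc (degree (\<Prod>e\<leftarrow>es. [:- e, 1:]))"
    unfolding cp by (subst degree_mult_eq) auto
  then obtain m where n: "n = Suc m" using degree_monic_char_poly[OF A] by (cases n) auto
  obtain W A3 where W: "W \<in> carrier_mat (Suc m) (Suc m)" and WtW: "transpose_mat W * W = 1\<^sub>m (Suc m)"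
    and A3: "A3 \<in> carrier_mat m m" "transpose_mat A3 = A3" "char_poly A3 = (\<Prod>e\<leftarrow>es. [:- e, 1:])"
    and blk: "transpose_mat W * A * W = four_block_mat (mat 1 1 (\<lambda>_. e)) (0\<^sub>m 1 m) (0\<^sub>m m 1) A3"
    by (rule real_symmetric_deflation[OF A[unfolded n] Cons.prems(2) cp])
  note W = W[folded n] and WtW = WtW[folded n]
  obtain P3 where P3: "P3 \<in> carrier_mat m m" "transpose_mat P3 * P3 = 1\<^sub>m m"
    and P3A3: "transpose_mat P3 * A3 * P3 = mat m m (\<lambda>(i, j). if i = j then es ! i else 0)"
    using Cons.IH[OF A3] by blast
  define E where "E = four_block_mat (1\<^sub>m 1) (0\<^sub>m 1 m) (0\<^sub>m m 1) P3"
  have "E \<in> carrier_mat (1 + m) (1 + m)"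
    unfolding E_def using P3(1) by (intro four_block_carrier_mat) auto
  then have E: "E \<in> carrier_mat n n" by (simp add: n)
  note E_props = orthonormal_block_diag_congruence[OF P3 A3(1), folded E_def]
  show ?case
  proof (intro bexI[of _ "W * E"] conjI)
    show "W * E \<in> carrier_mat n n" using W E by simp
    have "transpose_mat (W * E) * (W * E) = transpose_mat E * (transpose_mat W * W) * E"
      using W E by (simp add: transpose_mult[OF W E] assoc_mult_mat[of _ n n _ n _ n])
    then show "transpose_mat (W * E) * (W * E) = 1\<^sub>m n"
      using E E_props(1) unfolding WtW by (simp add: n)
    have "transpose_mat (W * E) * A * (W * E) = transpose_mat E * (transpose_mat W * A * W) * E"
      using W E A by (simp add: transpose_mult[OF W E] assoc_mult_mat[of _ n n _ n _ n])
    also have "\<dots> = four_block_mat (mat 1 1 (\<lambda>_. e)) (0\<^sub>m 1 m) (0\<^sub>m m 1) (mat m m (\<lambda>(i, j). if i = j then es ! i else 0))"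
      unfolding blk E_props(2) P3A3 ..
    also have "\<dots> = mat n n (\<lambda>(i, j). if i = j then (e # es) ! i else 0)"
      unfolding n by (rule four_block_diag_mat_Cons)
    finally show "transpose_mat (W * E) * A * (W * E) = mat n n (\<lambda>(i, j). if i = j then (e # es) ! i else 0)" .
  qed
qed

section \<open>Decay of the eigenvalues\<close>

lemma ordered_eigenvalues_diagonal_form:
  fixes A :: "real mat"
  assumes A: "A \<in> carrier_mat n n" and "transpose_mat A = A" and "ordered_eigenvalues A lam"
  obtains P where "P \<in> carrier_mat n n"
    and "\<And>c. c \<in> carrier_vec n \<Longrightarrow> (P *\<^sub>v c) \<bullet> (A *\<^sub>v (P *\<^sub>v c)) = (\<Sum>i<n. lam i * (c $ i)\<^sup>2)"
    and "\<And>c. c \<in> carrier_vec n \<Longrightarrow> (P *\<^sub>v c) \<bullet> (P *\<^sub>v c) = (\<Sum>i<n. (c $ i)\<^sup>2)"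
proof -
  have "char_poly A = (\<Prod>e\<leftarrow>map lam [0..<n]. [:- e, 1:])"
    using assms(3) A
    by (simp add: ordered_eigenvalues_def prod.distinct_set_conv_list[symmetric] atLeast0LessThan comp_def)
  then obtain P where P: "P \<in> carrier_mat n n" and PtP: "transpose_mat P * P = 1\<^sub>m n"
    and "transpose_mat P * A * P = mat n n (\<lambda>(i, j). if i = j then map lam [0..<n] ! i else 0)"
    using real_symmetric_orthogonal_diagonalization[OF A assms(2)] by blast
  moreover have "mat n n (\<lambda>(i, j). if i = j then map lam [0..<n] ! i else 0) = mat n n (\<lambda>(i, j). if i = j then lam i else 0)"
    by (rule eq_matI) auto
  ultimately have D: "transpose_mat P * A * P = mat n n (\<lambda>(i, j). if i = j then lam i else 0)"
    by simp
  show ?thesis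
  proof (rule that[OF P])
    fix c :: "real vec" assume c: "c \<in> carrier_vec n"
    have "(P *\<^sub>v c) \<bullet> (A *\<^sub>v (P *\<^sub>v c)) = ((transpose_mat P * A * P) *\<^sub>v c) \<bullet> c"
      using P A c
      by (simp add: comm_scalar_prod[of "P *\<^sub>v c" n] transpose_vec_mult_scalar[of P n n c, symmetric]
          assoc_mult_mat_vec[of _ n n _ n c])
    also have "(transpose_mat P * A * P) *\<^sub>v c = vec n (\<lambda>i. lam i * c $ i)"
    proof (rule eq_vecI)
      fix i assume "i < dim_vec (vec n (\<lambda>i. lam i * c $ i))"
      then have "i < n" by simp
      have "(\<Sum>j<n. (if i = j then lam i else 0) * c $ j) = (\<Sum>j<n. if i = j then lam i * c $ j else 0)"
        by (rule sum.cong) auto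
      then show "((transpose_mat P * A * P) *\<^sub>v c) $ i = vec n (\<lambda>i. lam i * c $ i) $ i"
        using \<open>i < n\<close> c by (simp add: D mult_mat_vec_def scalar_prod_def row_def atLeast0LessThan)
    qed (use P A in simp)
    finally show "(P *\<^sub>v c) \<bullet> (A *\<^sub>v (P *\<^sub>v c)) = (\<Sum>i<n. lam i * (c $ i)\<^sup>2)"
      using c by (simp add: scalar_prod_def atLeast0LessThan power2_eq_square mult_ac)
    have "(P *\<^sub>v c) \<bullet> (P *\<^sub>v c) = (transpose_mat P *\<^sub>v (P *\<^sub>v c)) \<bullet> c"
      using P c by (simp add: transpose_vec_mult_scalar[of P n n c, symmetric])
    also have "transpose_mat P *\<^sub>v (P *\<^sub>v c) = c"
      using P c PtP by (simp add: assoc_mult_mat_vec[of _ n n _ n c, symmetric])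
    finally show "(P *\<^sub>v c) \<bullet> (P *\<^sub>v c) = (\<Sum>i<n. (c $ i)\<^sup>2)"
      using c by (simp add: scalar_prod_def atLeast0LessThan power2_eq_square)
  qed
qed

lemma psd_ordered_eigenvalue_nonneg:
  fixes A :: "real mat"
  assumes "psd_mat A" "A \<in> carrier_mat n n" "ordered_eigenvalues A lam" "k < n"
  shows "lam k \<ge> 0"
proof -
  have sym: "transpose_mat A = A" and psd: "\<And>v. v \<in> carrier_vec n \<Longrightarrow> v \<bullet> (A *\<^sub>v v) \<ge> 0"
    using assms(1,2) unfolding psd_mat_def by auto
  obtain P where P: "P \<in> carrier_mat n n"
    and form: "\<And>c. c \<in> carrier_vec n \<Longrightarrow> (P *\<^sub>v c) \<bullet> (A *\<^sub>v (P *\<^sub>v c)) = (\<Sum>i<n. lam i * (c $ i)\<^sup>2)"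
    using ordered_eigenvalues_diagonal_form[OF assms(2) sym assms(3)] by blast
  have "(\<Sum>i<n. lam i * (unit_vec n k $ i)\<^sup>2) = (\<Sum>i<n. if i = k then lam i else 0)"
    by (rule sum.cong) (use \<open>k < n\<close> in auto)
  then have "(\<Sum>i<n. lam i * (unit_vec n k $ i)\<^sup>2) = lam k"
    using \<open>k < n\<close> by simp
  then show ?thesis using psd[of "P *\<^sub>v unit_vec n k"] form[of "unit_vec n k"] P by simp
qed

lemma exists_coeffs_orthogonal_to_constraints:
  fixes P :: "real mat" and g :: "nat \<Rightarrow> real vec"
  assumes P: "P \<in> carrier_mat n n" and "k < n" and g: "\<And>a. a < k \<Longrightarrow> g a \<in> carrier_vec n"
  obtains c :: "real vec" where "c \<in> carrier_vec n" "c \<noteq> 0\<^sub>v n" "\<And>j. k < j \<Longrightarrow> j < n \<Longrightarrow> c $ j = 0"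
    and "\<And>a. a < k \<Longrightarrow> g a \<bullet> (P *\<^sub>v c) = 0"
proof -
  \<comment> \<open>k linear conditions on the first k+1 coordinates, padded by a zero row to a singular square system\<close>
  define G where "G = mat\<^sub>r (Suc k) (Suc k) (\<lambda>a. if a = k then 0\<^sub>v (Suc k) else vec (Suc k) (\<lambda>j. g a \<bullet> col P j))"
  have G: "G \<in> carrier_mat (Suc k) (Suc k)" unfolding G_def by simp
  have "det G = 0" unfolding G_def by (rule det_row_0) auto
  then obtain d where d: "d \<in> carrier_vec (Suc k)" "d \<noteq> 0\<^sub>v (Suc k)" and Gd: "G *\<^sub>v d = 0\<^sub>v (Suc k)"
    unfolding det_0_iff_vec_prod_zero_field[OF G] by blast
  define c where "c = vec n (\<lambda>j. if j \<le> k then d $ j else 0)"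
  show ?thesis
  proof (rule that)
    show "c \<in> carrier_vec n" by (simp add: c_def)
    obtain j where "j < Suc k" "d $ j \<noteq> 0"
      using d by (metis carrier_vecD eq_vecI index_zero_vec(1,2))
    then have "c $ j \<noteq> 0" "j < n" using \<open>k < n\<close> by (auto simp: c_def)
    then show "c \<noteq> 0\<^sub>v n" by auto
    show "c $ j = 0" if "k < j" "j < n" for j
      using that by (simp add: c_def)
    show "g a \<bullet> (P *\<^sub>v c) = 0" if "a < k" for a
    proof -
      have c: "c \<in> carrier_vec n" by (simp add: c_def)
      have "g a \<bullet> (P *\<^sub>v c) = (transpose_mat P *\<^sub>v g a) \<bullet> c"
        by (rule transpose_vec_mult_scalar[OF P c g[OF that], symmetric])
      also have "\<dots> = (\<Sum>j<n. (g a \<bullet> col P j) * c $ j)"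
        using P c g[OF that]
        by (auto simp: scalar_prod_def atLeast0LessThan comm_scalar_prod[of "col P _" n "g a"] intro!: sum.cong)
      also have "\<dots> = (\<Sum>j<Suc k. (g a \<bullet> col P j) * d $ j)"
        using \<open>k < n\<close> by (intro sum.mono_neutral_cong_right) (auto simp: c_def)
      also have "\<dots> = (G *\<^sub>v d) $ a"
        using that d by (simp add: G_def scalar_prod_def atLeast0LessThan)
      finally show ?thesis using Gd that by simp
    qed
  qed
qed

lemma ordered_eigenvalue_le_form_bound:
  fixes A :: "real mat" and g :: "nat \<Rightarrow> real vec"
  assumes A: "A \<in> carrier_mat n n" and sym: "transpose_mat A = A" and ordered: "ordered_eigenvalues A lam"
    and "k < n" and g: "\<And>a. a < k \<Longrightarrow> g a \<in> carrier_vec n"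
    and form_bound: "\<And>v. v \<in> carrier_vec n \<Longrightarrow> (\<forall>a<k. g a \<bullet> v = 0) \<Longrightarrow> v \<bullet> (A *\<^sub>v v) \<le> t * (v \<bullet> v)"
  shows "lam k \<le> t"
proof -
  obtain P where P: "P \<in> carrier_mat n n"
    and form: "\<And>c. c \<in> carrier_vec n \<Longrightarrow> (P *\<^sub>v c) \<bullet> (A *\<^sub>v (P *\<^sub>v c)) = (\<Sum>i<n. lam i * (c $ i)\<^sup>2)"
    and norm: "\<And>c. c \<in> carrier_vec n \<Longrightarrow> (P *\<^sub>v c) \<bullet> (P *\<^sub>v c) = (\<Sum>i<n. (c $ i)\<^sup>2)"
    using ordered_eigenvalues_diagonal_form[OF A sym ordered] by blast
  obtain c where c: "c \<in> carrier_vec n" "c \<noteq> 0\<^sub>v n" and c_tail: "\<And>j. k < j \<Longrightarrow> j < n \<Longrightarrow> c $ j = 0"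
    and orth: "\<And>a. a < k \<Longrightarrow> g a \<bullet> (P *\<^sub>v c) = 0"
    using exists_coeffs_orthogonal_to_constraints[where g = g, OF P \<open>k < n\<close> g] by blast
  have "lam k * (\<Sum>i<n. (c $ i)\<^sup>2) \<le> (\<Sum>i<n. lam i * (c $ i)\<^sup>2)"
    unfolding sum_distrib_left
  proof (rule sum_mono)
    fix i assume "i \<in> {..<n}"
    then show "lam k * (c $ i)\<^sup>2 \<le> lam i * (c $ i)\<^sup>2"
    proof (cases "i \<le> k")
      case True
      then show ?thesis using ordered A \<open>k < n\<close> by (auto simp: ordered_eigenvalues_def intro: mult_right_mono)
    qed (simp add: c_tail)
  qed
  also have "\<dots> \<le> t * (\<Sum>i<n. (c $ i)\<^sup>2)"
    using form_bound[of "P *\<^sub>v c"] P c orth form norm by simp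
  finally have "lam k * (\<Sum>i<n. (c $ i)\<^sup>2) \<le> t * (\<Sum>i<n. (c $ i)\<^sup>2)" .
  moreover have "(\<Sum>i<n. (c $ i)\<^sup>2) > 0"
  proof -
    obtain j where "j < n" "c $ j \<noteq> 0" using c by (metis carrier_vecD eq_vecI index_zero_vec(1,2))
    then have "(c $ j)\<^sup>2 > 0" by simp
    also have "(c $ j)\<^sup>2 \<le> (\<Sum>i<n. (c $ i)\<^sup>2)" using \<open>j < n\<close> by (intro member_le_sum) auto
    finally show ?thesis .
  qed
  ultimately show ?thesis by simp
qed

lemma abs_weighted_sum_square_le:
  fixes v :: "real vec" and w :: "nat \<Rightarrow> real"
  assumes "v \<in> carrier_vec n" "\<And>i. w i \<ge> 0"
  shows "(\<Sum>i<n. \<bar>v $ i\<bar> * w i)\<^sup>2 \<le> (\<Sum>i<n. w i)\<^sup>2 * (v \<bullet> v)"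
proof -
  have vv: "v \<bullet> v = (\<Sum>i<n. (v $ i)\<^sup>2)"
    using assms(1) by (simp add: scalar_prod_def atLeast0LessThan power2_eq_square)
  have "\<bar>v $ i\<bar> \<le> sqrt (v \<bullet> v)" if "i < n" for i
  proof -
    have "(v $ i)\<^sup>2 \<le> v \<bullet> v" unfolding vv using that by (intro member_le_sum) auto
    then show ?thesis using real_sqrt_le_mono by fastforce
  qed
  then have "(\<Sum>i<n. \<bar>v $ i\<bar> * w i) \<le> sqrt (v \<bullet> v) * (\<Sum>i<n. w i)"
    unfolding sum_distrib_left using assms(2) by (intro sum_mono mult_right_mono) auto
  then have "(\<Sum>i<n. \<bar>v $ i\<bar> * w i)\<^sup>2 \<le> (sqrt (v \<bullet> v) * (\<Sum>i<n. w i))\<^sup>2"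
    using assms(2) by (intro power_mono sum_nonneg) auto
  also have "\<dots> = (\<Sum>i<n. w i)\<^sup>2 * (v \<bullet> v)"
    unfolding vv by (simp add: power_mult_distrib sum_nonneg)
  finally show ?thesis .
qed

lemma scalar_prod_kernel_mat:
  assumes "v \<in> carrier_vec n"
  shows "v \<bullet> (kernel_mat K x n \<epsilon> *\<^sub>v v) = (\<Sum>j<n. v $ j * (\<Sum>i<n. v $ i * K (\<epsilon> * x i) (\<epsilon> * x j)))"
proof -
  have "v \<bullet> (kernel_mat K x n \<epsilon> *\<^sub>v v) = (\<Sum>i<n. \<Sum>j<n. v $ j * (v $ i * K (\<epsilon> * x i) (\<epsilon> * x j)))"
    using assms by (simp add: kernel_mat_def scalar_prod_def atLeast0LessThan mult_mat_vec_def row_def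
        sum_distrib_left mult_ac)
  also have "\<dots> = (\<Sum>j<n. v $ j * (\<Sum>i<n. v $ i * K (\<epsilon> * x i) (\<epsilon> * x j)))"
    by (subst sum.swap) (simp add: sum_distrib_left)
  finally show ?thesis .
qed

lemma kernel_mat_ordered_eigenvalue_bigo:
  fixes K :: "real \<Rightarrow> real \<Rightarrow> real" and x :: "nat \<Rightarrow> real" and lam :: "real \<Rightarrow> nat \<Rightarrow> real"
  assumes Cll: "Cll n a K" and "a > 0" and "k < n" and "\<epsilon>0 > 0"
    and spectra: "\<forall>\<epsilon>\<in>{0..\<epsilon>0}. psd_mat (kernel_mat K x n \<epsilon>) \<and> ordered_eigenvalues (kernel_mat K x n \<epsilon>) (lam \<epsilon>)"
  shows "(\<lambda>\<epsilon>. lam \<epsilon> k) \<in> O[at_right 0](\<lambda>\<epsilon>. \<epsilon> ^ (2 * k))"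
proof -
  obtain B where bound: "\<And>i j s t. i \<le> n \<Longrightarrow> j \<le> n \<Longrightarrow> \<bar>s\<bar> \<le> a/2 \<Longrightarrow> \<bar>t\<bar> \<le> a/2 \<Longrightarrow>
      \<bar>pderiv_xy K i j s t\<bar> \<le> B"
    using Cll_bounded[OF Cll \<open>a > 0\<close>] by blast
  have "B \<ge> 0" using bound[of 0 0 0 0] \<open>a > 0\<close> by auto
  define C where "C = (\<Sum>i<n. \<bar>x i\<bar> ^ k)\<^sup>2 * B / (fact k)\<^sup>2"
  have "\<forall>\<^sub>F \<epsilon> in at_right 0. (0 < \<epsilon> \<and> \<epsilon> < 1 \<and> (\<forall>i<n. \<bar>\<epsilon> * x i\<bar> < a/2)) \<and> \<epsilon> \<in> {0<..<\<epsilon>0}"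
    using \<open>a > 0\<close> \<open>\<epsilon>0 > 0\<close> by (intro eventually_conj eventually_at_right_0_points_small eventually_at_right_real) auto
  then have "\<forall>\<^sub>F \<epsilon> in at_right 0. norm (lam \<epsilon> k) \<le> C * norm (\<epsilon> ^ (2 * k))"
  proof eventually_elim
    case (elim \<epsilon>)
    define A where "A = kernel_mat K x n \<epsilon>"
    have A: "A \<in> carrier_mat n n" by (simp add: A_def)
    have "psd_mat A" "ordered_eigenvalues A (lam \<epsilon>)" using spectra elim by (auto simp: A_def)
    then have sym: "transpose_mat A = A" using A by (simp add: psd_mat_def)
    have "lam \<epsilon> k \<le> C * \<epsilon> ^ (2 * k)"
    proof (rule ordered_eigenvalue_le_form_bound[OF A sym \<open>ordered_eigenvalues A (lam \<epsilon>)\<close> \<open>k < n\<close>])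
      show "vec n (\<lambda>i. x i ^ c) \<in> carrier_vec n" for c by simp
      fix v :: "real vec" assume v: "v \<in> carrier_vec n" and orth: "\<forall>c<k. vec n (\<lambda>i. x i ^ c) \<bullet> v = 0"
      have moments: "moment n x (\<lambda>i. v $ i) c = 0" if "c < k" for c
        using orth that v by (simp add: moment_def scalar_prod_def atLeast0LessThan mult.commute)
      have "v \<bullet> (A *\<^sub>v v) \<le> \<bar>\<Sum>j<n. v $ j * (\<Sum>i<n. v $ i * K (\<epsilon> * x i) (\<epsilon> * x j))\<bar>"
        unfolding A_def scalar_prod_kernel_mat[OF v] by simp
      also have "\<dots> \<le> \<epsilon> ^ (k + k) * (\<Sum>i<n. \<bar>v $ i\<bar> * \<bar>x i\<bar> ^ k) * (\<Sum>i<n. \<bar>v $ i\<bar> * \<bar>x i\<bar> ^ k) * B / (fact k * fact k)"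
        using elim \<open>k < n\<close> moments
        by (intro kernel_form_vanishing_moments_bound[OF Cll \<open>a > 0\<close> bound]) auto
      also have "\<dots> = \<epsilon> ^ (2 * k) * (\<Sum>i<n. \<bar>v $ i\<bar> * \<bar>x i\<bar> ^ k)\<^sup>2 * B / (fact k)\<^sup>2"
        unfolding mult_2 by (simp add: power2_eq_square mult_ac)
      also have "\<dots> \<le> \<epsilon> ^ (2 * k) * ((\<Sum>i<n. \<bar>x i\<bar> ^ k)\<^sup>2 * (v \<bullet> v)) * B / (fact k)\<^sup>2"
        using abs_weighted_sum_square_le[OF v, of "\<lambda>i. \<bar>x i\<bar> ^ k"] elim \<open>B \<ge> 0\<close>
        by (intro divide_right_mono mult_right_mono mult_left_mono) auto
      finally show "v \<bullet> (A *\<^sub>v v) \<le> C * \<epsilon> ^ (2 * k) * (v \<bullet> v)" by (simp add: C_def mult_ac)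
    qed
    moreover have "lam \<epsilon> k \<ge> 0"
      using psd_ordered_eigenvalue_nonneg[OF \<open>psd_mat A\<close> A \<open>ordered_eigenvalues A (lam \<epsilon>)\<close> \<open>k < n\<close>] .
    ultimately show ?case using elim by simp
  qed
  then show ?thesis by (rule bigoI)
qed

theorem theorem4p1:
  fixes a :: real and n :: nat and K :: "real \<Rightarrow> real \<Rightarrow> real" and x :: "nat \<Rightarrow> real"
  assumes "a > 0" and "n \<ge> 1" and "Cll n a K"
  shows "(\<exists>R. R \<in> O[at_right 0](\<lambda>\<epsilon>. \<epsilon>) \<and>
            (\<forall>\<^sub>F \<epsilon> in at_right 0. det (kernel_mat K x n \<epsilon>) =
               \<epsilon> ^ (n * (n - 1)) *
               ((det (vandermonde x n (n - 1)))\<^sup>2 * det (wronskian K (n - 1)) + R \<epsilon>)))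
       \<and> (\<forall>\<epsilon>0 lam. \<epsilon>0 > 0 \<and>
            (\<forall>\<epsilon>\<in>{0..\<epsilon>0}. psd_mat (kernel_mat K x n \<epsilon>) \<and> ordered_eigenvalues (kernel_mat K x n \<epsilon>) (lam \<epsilon>))
            \<longrightarrow> (\<forall>k<n. (\<lambda>\<epsilon>. lam \<epsilon> k) \<in> O[at_right 0](\<lambda>\<epsilon>. \<epsilon> ^ (2 * k))))"
proof (intro conjI allI impI)
  show "\<exists>R. R \<in> O[at_right 0](\<lambda>\<epsilon>. \<epsilon>) \<and>
          (\<forall>\<^sub>F \<epsilon> in at_right 0. det (kernel_mat K x n \<epsilon>) =
             \<epsilon> ^ (n * (n - 1)) * ((det (vandermonde x n (n - 1)))\<^sup>2 * det (wronskian K (n - 1)) + R \<epsilon>))"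
  proof (cases "inj_on x {..<n}")
    case True
    then show ?thesis by (rule det_kernel_mat_expansion_inj[OF assms(3,1,2)])
  next
    case False
    then show ?thesis by (rule det_kernel_mat_expansion_not_inj[OF assms(2)])
  qed
  fix \<epsilon>0 lam k
  assume "\<epsilon>0 > 0 \<and> (\<forall>\<epsilon>\<in>{0..\<epsilon>0}. psd_mat (kernel_mat K x n \<epsilon>) \<and> ordered_eigenvalues (kernel_mat K x n \<epsilon>) (lam \<epsilon>))"
    and "k < n"
  then show "(\<lambda>\<epsilon>. lam \<epsilon> k) \<in> O[at_right 0](\<lambda>\<epsilon>. \<epsilon> ^ (2 * k))"
    using kernel_mat_ordered_eigenvalue_bigo[OF assms(3,1)] by blast
qed

end
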